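(* The convex Vietoris functor $\mathbb{V}^{\mathrm{c}}\colon\mathbf{CompOrd}\to\mathbf{CompOrd}$ preserves coreflexive equalizers: if $f,g\colon X\to Y$ are morphisms in $\mathbf{CompOrd}$ with a common retraction $k\colon Y\to X$ ($k\circ f=k\circ g=1_X$) and $h\colon E\to X$ is an equalizer of $f,g$ in $\mathbf{CompOrd}$, then $\mathbb{V}^{\mathrm{c}}h$ is an equalizer of $\mathbb{V}^{\mathrm{c}}f$ and $\mathbb{V}^{\mathrm{c}}g$ in $\mathbf{CompOrd}$.
   Context: $\mathbf{CompOrd}$ is the category of compact ordered spaces (compact Hausdorff spaces with a partial order closed in $X\times X$) and continuous order-preserving maps. For a subset $Y$ of a poset, $\uparrow Y$, $\downarrow Y$ are up- and down-closure; $Y$ is convex if $y_1\le x\le y_2$ with $y_1,y_2\in Y$ implies $x\in Y$; $\updownarrow Y=\uparrow Y\cap\downarrow Y$. $\mathbb{V}^{\mathrm{c}}X$ is the set of closed convex subsets of $X$ (including $\varnothing$) with the topology generated by $\Diamond U=\{K\mid K\cap U\neq\varnothing\}$ and $\Box U=\{K\mid K\subseteq U\}$ ($U$ open upset or open downset of $X$) and the Egli–Milner order $K\le_{\mathrm{EM}}L$ iff $\uparrow L\subseteq\uparrow K$ and $\downarrow K\subseteq\downarrow L$; it is a compact ordered space, and $\mathbb{V}^{\mathrm{c}}f(K)=\updownarrow f[K]$ defines an endofunctor. *)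

theory Defs
  imports "HOL-Analysis.Analysis"
begin

definition compord :: "'a topology \<Rightarrow> ('a \<Rightarrow> 'a \<Rightarrow> bool) \<Rightarrow> bool" where
  "compord T le \<longleftrightarrow>
     compact_space T \<and> Hausdorff_space T \<and>
     (\<forall>x\<in>topspace T. le x x) \<and>
     (\<forall>x\<in>topspace T. \<forall>y\<in>topspace T. \<forall>z\<in>topspace T. le x y \<and> le y z \<longrightarrow> le x z) \<and>
     (\<forall>x\<in>topspace T. \<forall>y\<in>topspace T. le x y \<and> le y x \<longrightarrow> x = y) \<and>
     closedin (prod_topology T T) {(x, y). x \<in> topspace T \<and> y \<in> topspace T \<and> le x y}"

definition compord_mor ::
  "'a topology \<Rightarrow> ('a \<Rightarrow> 'a \<Rightarrow> bool) \<Rightarrow> 'b topology \<Rightarrow> ('b \<Rightarrow> 'b \<Rightarrow> bool) \<Rightarrow> ('a \<Rightarrow> 'b) \<Rightarrow> bool" where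
  "compord_mor T le S le' f \<longleftrightarrow>
     continuous_map T S f \<and>
     (\<forall>x\<in>topspace T. \<forall>y\<in>topspace T. le x y \<longrightarrow> le' (f x) (f y))"

definition upc :: "'a topology \<Rightarrow> ('a \<Rightarrow> 'a \<Rightarrow> bool) \<Rightarrow> 'a set \<Rightarrow> 'a set" where
  "upc T le Y = {x \<in> topspace T. \<exists>y\<in>Y. le y x}"

definition downc :: "'a topology \<Rightarrow> ('a \<Rightarrow> 'a \<Rightarrow> bool) \<Rightarrow> 'a set \<Rightarrow> 'a set" where
  "downc T le Y = {x \<in> topspace T. \<exists>y\<in>Y. le x y}"

definition updownc :: "'a topology \<Rightarrow> ('a \<Rightarrow> 'a \<Rightarrow> bool) \<Rightarrow> 'a set \<Rightarrow> 'a set" where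
  "updownc T le Y = upc T le Y \<inter> downc T le Y"

definition convex_set :: "'a topology \<Rightarrow> ('a \<Rightarrow> 'a \<Rightarrow> bool) \<Rightarrow> 'a set \<Rightarrow> bool" where
  "convex_set T le Y \<longleftrightarrow>
     (\<forall>y1\<in>Y. \<forall>y2\<in>Y. \<forall>x\<in>topspace T. le y1 x \<and> le x y2 \<longrightarrow> x \<in> Y)"

definition is_upset :: "'a topology \<Rightarrow> ('a \<Rightarrow> 'a \<Rightarrow> bool) \<Rightarrow> 'a set \<Rightarrow> bool" where
  "is_upset T le U \<longleftrightarrow> U \<subseteq> topspace T \<and> upc T le U \<subseteq> U"

definition is_downset :: "'a topology \<Rightarrow> ('a \<Rightarrow> 'a \<Rightarrow> bool) \<Rightarrow> 'a set \<Rightarrow> bool" where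
  "is_downset T le U \<longleftrightarrow> U \<subseteq> topspace T \<and> downc T le U \<subseteq> U"

text \<open>Carrier of the convex Vietoris space: closed convex subsets (including the empty set).\<close>

definition vc_set :: "'a topology \<Rightarrow> ('a \<Rightarrow> 'a \<Rightarrow> bool) \<Rightarrow> 'a set set" where
  "vc_set T le = {K. closedin T K \<and> convex_set T le K}"

definition vc_diamond :: "'a topology \<Rightarrow> ('a \<Rightarrow> 'a \<Rightarrow> bool) \<Rightarrow> 'a set \<Rightarrow> 'a set set" where
  "vc_diamond T le U = {K \<in> vc_set T le. K \<inter> U \<noteq> {}}"

definition vc_box :: "'a topology \<Rightarrow> ('a \<Rightarrow> 'a \<Rightarrow> bool) \<Rightarrow> 'a set \<Rightarrow> 'a set set" where
  "vc_box T le U = {K \<in> vc_set T le. K \<subseteq> U}"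

definition open_updown :: "'a topology \<Rightarrow> ('a \<Rightarrow> 'a \<Rightarrow> bool) \<Rightarrow> 'a set \<Rightarrow> bool" where
  "open_updown T le U \<longleftrightarrow> openin T U \<and> (is_upset T le U \<or> is_downset T le U)"

text \<open>Topology on V^c X generated by the subbasis of all diamond U and box U, U an open upset or
  open downset.  (Its topspace is vc_set, since box (topspace T) = vc_set.)\<close>

definition vc_top :: "'a topology \<Rightarrow> ('a \<Rightarrow> 'a \<Rightarrow> bool) \<Rightarrow> 'a set topology" where
  "vc_top T le = topology_generated_by
     ({vc_diamond T le U | U. open_updown T le U} \<union> {vc_box T le U | U. open_updown T le U})"

definition vc_le :: "'a topology \<Rightarrow> ('a \<Rightarrow> 'a \<Rightarrow> bool) \<Rightarrow> 'a set \<Rightarrow> 'a set \<Rightarrow> bool" where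
  "vc_le T le K L \<longleftrightarrow> upc T le L \<subseteq> upc T le K \<and> downc T le K \<subseteq> downc T le L"

definition vc_map :: "'b topology \<Rightarrow> ('b \<Rightarrow> 'b \<Rightarrow> bool) \<Rightarrow> ('a \<Rightarrow> 'b) \<Rightarrow> 'a set \<Rightarrow> 'b set" where
  "vc_map S le' f K = updownc S le' (f ` K)"

text \<open>Equalizer in CompOrd.  HOL cannot quantify over types inside a formula, so the universal
  property is stated for test objects Z whose points are of a given type 'z.\<close>

definition is_equalizer_wrt :: "'z itself \<Rightarrow>
    'e topology \<Rightarrow> ('e \<Rightarrow> 'e \<Rightarrow> bool) \<Rightarrow> 'x topology \<Rightarrow> ('x \<Rightarrow> 'x \<Rightarrow> bool) \<Rightarrow>
    'y topology \<Rightarrow> ('y \<Rightarrow> 'y \<Rightarrow> bool) \<Rightarrow> ('e \<Rightarrow> 'x) \<Rightarrow> ('x \<Rightarrow> 'y) \<Rightarrow> ('x \<Rightarrow> 'y) \<Rightarrow> bool" where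
  "is_equalizer_wrt _ TE leE TX leX TY leY h f g \<longleftrightarrow>
     compord TE leE \<and> compord_mor TE leE TX leX h \<and>
     (\<forall>e\<in>topspace TE. f (h e) = g (h e)) \<and>
     (\<forall>(TZ :: 'z topology) leZ z.
        compord TZ leZ \<and> compord_mor TZ leZ TX leX z \<and> (\<forall>w\<in>topspace TZ. f (z w) = g (z w)) \<longrightarrow>
        (\<exists>u. compord_mor TZ leZ TE leE u \<and> (\<forall>w\<in>topspace TZ. h (u w) = z w) \<and>
             (\<forall>u'. compord_mor TZ leZ TE leE u' \<and> (\<forall>w\<in>topspace TZ. h (u' w) = z w) \<longrightarrow>
                   (\<forall>w\<in>topspace TZ. u' w = u w))))"

end

theory Submission
  imports Defs
begin

text \<open>The convex Vietoris space of a compact ordered space is again one: Nachbin's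
  separation of closed upsets from closed downsets separates Egli--Milner-incomparable convex
  sets by subbasic open sets, which gives the Hausdorff property and the closedness of the
  order, and Alexander's subbase theorem gives compactness.

  The equalizer h embeds E order-isomorphically onto the set where f and g agree, so
  V h reflects the order; a morphism from a compact ordered space that reflects the order
  is a closed embedding through which every morphism landing in its image factors uniquely.
  It remains to show that every closed convex L with V f L = V g L lies in the image
  of V h.  If m is minimal in L, then f m lies above some g l; applying the common
  retraction k gives l \<le> m, so l = m and g m \<le> f m, and symmetrically f m \<le> g m.  Dually
  maximal points of L are equalized.  By Zorn's lemma and compactness every point of L lies
  between a minimal and a maximal point of L, so L is the convex hull of its part inside the
  equalizer, i.e. L = V h (the preimage of L under h).\<close>

section \<open>Reversing the order\<close>

text \<open>Reversing the order exchanges up- and down-closures but leaves the convex Vietoris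
  construction unchanged; the downward halves of the lemmas below are obtained by interpreting
  the upward ones for the reversed order.\<close>

lemma upc_conversep: "upc T le\<inverse>\<inverse> A = downc T le A"
  and downc_conversep: "downc T le\<inverse>\<inverse> A = upc T le A"
  by (auto simp: upc_def downc_def)

lemma updownc_conversep: "updownc T le\<inverse>\<inverse> A = updownc T le A"
  by (auto simp: updownc_def upc_conversep downc_conversep)

lemma is_upset_conversep: "is_upset T le\<inverse>\<inverse> U \<longleftrightarrow> is_downset T le U"
  and is_downset_conversep: "is_downset T le\<inverse>\<inverse> U \<longleftrightarrow> is_upset T le U"
  by (simp_all add: is_upset_def is_downset_def upc_conversep downc_conversep)

lemma open_updown_conversep: "open_updown T le\<inverse>\<inverse> = open_updown T le"
  by (auto simp: open_updown_def is_upset_conversep is_downset_conversep fun_eq_iff)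

lemma vc_set_conversep: "vc_set T le\<inverse>\<inverse> = vc_set T le"
  by (auto simp: vc_set_def convex_set_def)

lemma vc_top_conversep: "vc_top T le\<inverse>\<inverse> = vc_top T le"
  by (simp add: vc_top_def vc_diamond_def vc_box_def vc_set_conversep open_updown_conversep)

lemma vc_le_conversep: "vc_le T le\<inverse>\<inverse> K L \<longleftrightarrow> vc_le T le L K"
  by (auto simp: vc_le_def upc_conversep downc_conversep)

lemma vc_map_conversep: "vc_map S le\<inverse>\<inverse> f = vc_map S le f"
  by (simp add: vc_map_def updownc_conversep fun_eq_iff)

lemma compord_mor_conversep:
  "compord_mor T le\<inverse>\<inverse> S le'\<inverse>\<inverse> f \<longleftrightarrow> compord_mor T le S le' f"
  by (auto simp: compord_mor_def)

lemma compord_conversep: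
  assumes "compord T le" shows "compord T le\<inverse>\<inverse>"
proof -
  let ?G = "{(x, y). x \<in> topspace T \<and> y \<in> topspace T \<and> le x y}"
  have "{(x, y). x \<in> topspace T \<and> y \<in> topspace T \<and> le\<inverse>\<inverse> x y}
      = {p \<in> topspace (prod_topology T T). (\<lambda>(x, y). (y, x)) p \<in> ?G}"
    by auto
  moreover have "closedin (prod_topology T T) {p \<in> topspace (prod_topology T T). (\<lambda>(x, y). (y, x)) p \<in> ?G}"
    using closedin_continuous_map_preimage[OF homeomorphic_imp_continuous_map[OF homeomorphic_map_swap]]
      assms unfolding compord_def by blast
  ultimately have "closedin (prod_topology T T) {(x, y). x \<in> topspace T \<and> y \<in> topspace T \<and> le\<inverse>\<inverse> x y}"
    by simp
  with assms show ?thesis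
    unfolding compord_def conversep_iff by (intro conjI ballI impI) (blast | simp)+
qed

section \<open>Compact ordered spaces\<close>

locale compord_space =
  fixes T :: "'a topology" and le :: "'a \<Rightarrow> 'a \<Rightarrow> bool"
  assumes compord: "compord T le"
begin

abbreviation "S \<equiv> topspace T"

lemma compact: "compact_space T"
  and hausdorff: "Hausdorff_space T"
  and ord_refl: "x \<in> S \<Longrightarrow> le x x"
  and ord_trans: "x \<in> S \<Longrightarrow> y \<in> S \<Longrightarrow> z \<in> S \<Longrightarrow> le x y \<Longrightarrow> le y z \<Longrightarrow> le x z"
  and ord_antisym: "x \<in> S \<Longrightarrow> y \<in> S \<Longrightarrow> le x y \<Longrightarrow> le y x \<Longrightarrow> x = y"
  and closedin_graph: "closedin (prod_topology T T) {(x, y). x \<in> S \<and> y \<in> S \<and> le x y}"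
  using compord unfolding compord_def by blast+

lemma dual: "compord_space T le\<inverse>\<inverse>"
  by unfold_locales (rule compord_conversep[OF compord])

lemma closedin_singleton: "x \<in> S \<Longrightarrow> closedin T {x}"
  by (intro closedin_t1_singleton Hausdorff_imp_t1_space hausdorff)

lemma closedin_image:
  assumes "compord_mor T le T' le' f" "compord T' le'" "closedin T K"
  shows "closedin T' (f ` K)"
  using assms image_compactin[OF closedin_compact_space[OF compact]] compactin_imp_closedin
  unfolding compord_mor_def compord_def by blast

lemma compord_subtopology:
  assumes C: "closedin T C" shows "compord (subtopology T C) le"
proof -
  have CS: "C \<subseteq> S" using closedin_subset[OF C] .
  have "{(x, y). x \<in> C \<and> y \<in> C \<and> le x y} = {(x, y). x \<in> S \<and> y \<in> S \<and> le x y} \<inter> C \<times> C"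
    using CS by blast
  then have "closedin (prod_topology (subtopology T C) (subtopology T C))
      {(x, y). x \<in> C \<and> y \<in> C \<and> le x y}"
    using closedin_graph by (auto simp: subtopology_Times[symmetric] closedin_subtopology)
  moreover have "compact_space (subtopology T C)"
    using closedin_compact_space[OF compact C] by (rule compact_space_subtopology)
  moreover have "Hausdorff_space (subtopology T C)"
    using hausdorff by (rule Hausdorff_space_subtopology)
  ultimately show ?thesis
    unfolding compord_def topspace_subtopology_subset[OF CS]
  proof (intro conjI ballI impI; (elim conjE)?)
    show "le x x" if "x \<in> C" for x
      using that CS ord_refl by blast
    show "le x z" if "x \<in> C" "y \<in> C" "z \<in> C" "le x y" "le y z" for x y z
      using that CS ord_trans[of x y z] by blast
    show "x = y" if "x \<in> C" "y \<in> C" "le x y" "le y x" for x y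
      using that CS ord_antisym[of x y] by blast
  qed
qed

lemma subset_upc: "A \<subseteq> S \<Longrightarrow> A \<subseteq> upc T le A"
  unfolding upc_def using ord_refl by blast

lemma subset_downc: "A \<subseteq> S \<Longrightarrow> A \<subseteq> downc T le A"
  unfolding downc_def using ord_refl by blast

lemma is_upset_upc: "A \<subseteq> S \<Longrightarrow> is_upset T le (upc T le A)"
  unfolding is_upset_def upc_def by (blast intro: ord_trans)

lemma is_downset_downc: "A \<subseteq> S \<Longrightarrow> is_downset T le (downc T le A)"
  unfolding is_downset_def downc_def by (blast intro: ord_trans)

lemma closedin_upc:
  assumes "closedin T A" shows "closedin T (upc T le A)"
proof -
  let ?G = "{(x, y). x \<in> S \<and> y \<in> S \<and> le x y} \<inter> (A \<times> S)"
  have "compactin (prod_topology T T) ?G"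
    using assms closedin_graph
    by (intro closedin_compact_space compact_space_prod_topology[THEN iffD2])
      (auto simp: closedin_Int closedin_prod_Times_iff compact)
  then have "compactin T (snd ` ?G)"
    using image_compactin continuous_map_snd by blast
  moreover have "snd ` ?G = upc T le A"
    using closedin_subset[OF assms] by (force simp: upc_def)
  ultimately show ?thesis
    using compactin_imp_closedin hausdorff by metis
qed

lemma closedin_downc: "closedin T A \<Longrightarrow> closedin T (downc T le A)"
  using compord_space.closedin_upc[OF dual] by (simp add: upc_conversep)

lemma open_upset_between:
  assumes "is_upset T le A" "openin T U" "A \<subseteq> U"
  obtains V where "openin T V" "is_upset T le V" "A \<subseteq> V" "V \<subseteq> U"
proof
  let ?V = "S - downc T le (S - U)"
  show "openin T ?V"
    using assms(2) by (intro openin_diff openin_topspace closedin_downc closedin_diff) auto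
  show "is_upset T le ?V"
    unfolding is_upset_def upc_def downc_def by (blast intro: ord_trans)
  show "A \<subseteq> ?V"
    using assms(1,3) unfolding is_upset_def upc_def downc_def by blast
  show "?V \<subseteq> U"
    unfolding downc_def using ord_refl by blast
qed

lemma open_downset_between:
  assumes "is_downset T le A" "openin T U" "A \<subseteq> U"
  obtains V where "openin T V" "is_downset T le V" "A \<subseteq> V" "V \<subseteq> U"
  using compord_space.open_upset_between[OF dual] assms
  by (metis is_upset_conversep)

lemma separate_upset_downset:
  assumes A: "closedin T A" "is_upset T le A" and B: "closedin T B" "is_downset T le B"
    and "A \<inter> B = {}"
  obtains U V where "openin T U" "is_upset T le U" "A \<subseteq> U"
    "openin T V" "is_downset T le V" "B \<subseteq> V" "U \<inter> V = {}"
proof -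
  let ?G = "{(x, y). x \<in> S \<and> y \<in> S \<and> le x y}"
  have "openin (prod_topology T T) (S \<times> S - ?G)"
    using closedin_graph by (simp add: closedin_def)
  moreover have "A \<times> B \<subseteq> S \<times> S - ?G"
    using assms closedin_subset unfolding is_upset_def upc_def by blast
  ultimately obtain U0 V0 where "openin T U0" "openin T V0" "A \<subseteq> U0" "B \<subseteq> V0"
    and U0V0: "U0 \<times> V0 \<subseteq> S \<times> S - ?G"
    using Wallace_theorem_prod_topology[OF closedin_compact_space[OF compact A(1)]
        closedin_compact_space[OF compact B(1)]] by blast
  obtain U where U: "openin T U" "is_upset T le U" "A \<subseteq> U" "U \<subseteq> U0"
    using open_upset_between[OF A(2) \<open>openin T U0\<close> \<open>A \<subseteq> U0\<close>] .
  obtain V where V: "openin T V" "is_downset T le V" "B \<subseteq> V" "V \<subseteq> V0"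
    using open_downset_between[OF B(2) \<open>openin T V0\<close> \<open>B \<subseteq> V0\<close>] .
  have "U \<inter> V = {}"
  proof (rule ccontr)
    assume "U \<inter> V \<noteq> {}"
    then obtain x where "x \<in> U0" "x \<in> V0" using U(4) V(4) by blast
    then show False using U0V0 ord_refl by blast
  qed
  then show ?thesis using that[OF U(1-3) V(1-3)] by blast
qed

lemma finite_chain_has_least:
  assumes "finite F" "F \<noteq> {}" "F \<subseteq> S" "\<forall>a\<in>F. \<forall>b\<in>F. le a b \<or> le b a"
  shows "\<exists>c\<in>F. \<forall>a\<in>F. le c a"
  using assms
proof (induction F rule: finite_ne_induct)
  case (singleton x)
  then show ?case using ord_refl by auto
next
  case (insert x F)
  then obtain c where c: "c \<in> F" "\<forall>a\<in>F. le c a" by auto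
  have xS: "x \<in> S" and FS: "F \<subseteq> S" using insert.prems by auto
  show ?case
  proof (cases "le x c")
    case True
    then have "\<forall>a\<in>F. le x a" using c xS FS ord_trans[of x c] by blast
    then show ?thesis using xS ord_refl by auto
  next
    case False
    then have "le c x" using insert.prems c by blast
    then show ?thesis using c by auto
  qed
qed

lemma chain_has_lower_bound:
  assumes L: "closedin T L" and C: "C \<subseteq> L" "C \<noteq> {}" "\<forall>a\<in>C. \<forall>b\<in>C. le a b \<or> le b a"
  shows "\<exists>u\<in>L. \<forall>c\<in>C. le u c"
proof -
  have LS: "L \<subseteq> S" using closedin_subset[OF L] .
  let ?\<U> = "(\<lambda>c. L \<inter> downc T le {c}) ` C"
  have closed: "\<forall>Q\<in>?\<U>. closedin T Q"
    using L C LS by (auto intro!: closedin_Int closedin_downc closedin_singleton)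
  have fip: "\<forall>\<F>. finite \<F> \<and> \<F> \<subseteq> ?\<U> \<longrightarrow> \<Inter>\<F> \<noteq> {}"
  proof (intro allI impI, elim conjE)
    fix \<F> assume "finite \<F>" "\<F> \<subseteq> ?\<U>"
    then obtain F where F: "F \<subseteq> C" "finite F" "\<F> = (\<lambda>c. L \<inter> downc T le {c}) ` F"
      using finite_subset_image[of \<F> "\<lambda>c. L \<inter> downc T le {c}" C] by blast
    show "\<Inter>\<F> \<noteq> {}"
    proof (cases "F = {}")
      case True
      then show ?thesis using F by simp
    next
      case False
      have "F \<subseteq> S" "\<forall>a\<in>F. \<forall>b\<in>F. le a b \<or> le b a"
        using F(1) C LS by blast+
      then obtain c where "c \<in> F" "\<forall>a\<in>F. le c a"
        using finite_chain_has_least[OF F(2) False] by blast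
      then have "c \<in> \<Inter>\<F>"
        using F(1,3) C LS unfolding downc_def by blast
      then show ?thesis by blast
    qed
  qed
  have "\<Inter>?\<U> \<noteq> {}"
    using compact[unfolded compact_space_fip, rule_format, OF conjI[OF closed fip]] .
  then obtain u where "\<forall>c\<in>C. u \<in> L \<and> u \<in> downc T le {c}" by blast
  then show ?thesis using C(2) unfolding downc_def by blast
qed

lemma exists_minimal:
  assumes L: "closedin T L" and "L \<noteq> {}"
  shows "\<exists>m\<in>L. \<forall>y\<in>L. le y m \<longrightarrow> y = m"
proof -
  have LS: "L \<subseteq> S" using closedin_subset[OF L] .
  have "\<exists>m\<in>L. \<forall>a\<in>L. le\<inverse>\<inverse> m a \<longrightarrow> a = m"
  proof (rule predicate_Zorn)
    show "partial_order_on L (relation_of le\<inverse>\<inverse> L)"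
    proof (rule partial_order_on_relation_ofI)
      show "le\<inverse>\<inverse> a a" if "a \<in> L" for a
        using that LS ord_refl by auto
      show "le\<inverse>\<inverse> a c" if "a \<in> L" "b \<in> L" "c \<in> L" "le\<inverse>\<inverse> a b" "le\<inverse>\<inverse> b c" for a b c
        using that LS ord_trans[of c b a] by auto
      show "a = b" if "a \<in> L" "b \<in> L" "le\<inverse>\<inverse> a b" "le\<inverse>\<inverse> b a" for a b
        using that LS ord_antisym[of a b] by auto
    qed
  next
    fix C assume C: "C \<in> Chains (relation_of le\<inverse>\<inverse> L)"
    then have CL: "C \<subseteq> L" by (rule Chains_relation_of)
    have comparable: "\<forall>a\<in>C. \<forall>b\<in>C. le a b \<or> le b a"
      using C unfolding Chains_def relation_of_def by auto
    show "\<exists>u\<in>L. \<forall>a\<in>C. le\<inverse>\<inverse> a u"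
    proof (cases "C = {}")
      case True
      then show ?thesis using assms(2) by auto
    next
      case False
      then show ?thesis using chain_has_lower_bound[OF L CL False comparable] by auto
    qed
  qed
  then show ?thesis by simp
qed

lemma exists_minimal_below:
  assumes L: "closedin T L" and x: "x \<in> L"
  obtains m where "m \<in> L" "le m x" "\<forall>y\<in>L. le y m \<longrightarrow> y = m"
proof -
  let ?A = "L \<inter> downc T le {x}"
  have LS: "L \<subseteq> S" using closedin_subset[OF L] .
  have "closedin T ?A"
    using L x LS by (intro closedin_Int closedin_downc closedin_singleton) auto
  moreover have "x \<in> ?A"
    using x LS ord_refl unfolding downc_def by blast
  ultimately obtain m where m: "m \<in> L" "le m x" and min: "\<forall>y\<in>?A. le y m \<longrightarrow> y = m"
    using exists_minimal[of ?A] unfolding downc_def by blast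
  have "\<forall>y\<in>L. le y m \<longrightarrow> y = m"
  proof (intro ballI impI)
    fix y assume y: "y \<in> L" "le y m"
    then have "le y x" using m LS x ord_trans[of y m x] by blast
    then have "y \<in> ?A" using y(1) LS unfolding downc_def by blast
    then show "y = m" using min y(2) by blast
  qed
  with m show ?thesis by (rule that)
qed

lemma exists_maximal_above:
  assumes "closedin T L" "x \<in> L"
  obtains m where "m \<in> L" "le x m" "\<forall>y\<in>L. le m y \<longrightarrow> y = m"
proof -
  obtain m where "m \<in> L" "le\<inverse>\<inverse> m x" "\<forall>y\<in>L. le\<inverse>\<inverse> y m \<longrightarrow> y = m"
    by (rule compord_space.exists_minimal_below[OF dual assms])
  then show ?thesis using that by simp
qed

lemma subset_updownc: "A \<subseteq> S \<Longrightarrow> A \<subseteq> updownc T le A"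
  unfolding updownc_def using subset_upc subset_downc by blast

lemma upc_updownc:
  assumes "A \<subseteq> S" shows "upc T le (updownc T le A) = upc T le A"
proof
  show "upc T le A \<subseteq> upc T le (updownc T le A)"
    using subset_updownc[OF assms] unfolding upc_def by blast
  show "upc T le (updownc T le A) \<subseteq> upc T le A"
  proof
    fix y assume "y \<in> upc T le (updownc T le A)"
    then obtain z a where "y \<in> S" "z \<in> S" "a \<in> A" "le a z" "le z y"
      unfolding upc_def updownc_def by blast
    then show "y \<in> upc T le A"
      using assms ord_trans[of a z y] unfolding upc_def by blast
  qed
qed

lemma downc_updownc: "A \<subseteq> S \<Longrightarrow> downc T le (updownc T le A) = downc T le A"
  using compord_space.upc_updownc[OF dual] by (simp add: upc_conversep updownc_conversep)

lemma updownc_disjoint_upset: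
  assumes U: "is_upset T le U" and A: "A \<subseteq> S"
  shows "updownc T le A \<inter> U = {} \<longleftrightarrow> A \<inter> U = {}"
proof
  show "updownc T le A \<inter> U = {} \<Longrightarrow> A \<inter> U = {}"
    using subset_updownc[OF A] by blast
  assume disj: "A \<inter> U = {}"
  show "updownc T le A \<inter> U = {}"
  proof (rule ccontr)
    assume "updownc T le A \<inter> U \<noteq> {}"
    then obtain y a where "y \<in> U" "a \<in> A" "le y a"
      unfolding updownc_def downc_def by blast
    then have "a \<in> upc T le U" using A unfolding upc_def by blast
    then have "a \<in> U" using U unfolding is_upset_def by blast
    then show False using disj \<open>a \<in> A\<close> by blast
  qed
qed

lemma updownc_subset_upset:
  assumes U: "is_upset T le U" and A: "A \<subseteq> S"
  shows "updownc T le A \<subseteq> U \<longleftrightarrow> A \<subseteq> U"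
proof
  show "updownc T le A \<subseteq> U \<Longrightarrow> A \<subseteq> U"
    using subset_updownc[OF A] by blast
  assume sub: "A \<subseteq> U"
  show "updownc T le A \<subseteq> U"
  proof
    fix y assume "y \<in> updownc T le A"
    then obtain a where "y \<in> S" "a \<in> A" "le a y"
      unfolding updownc_def upc_def by blast
    then have "y \<in> upc T le U" using sub unfolding upc_def by blast
    then show "y \<in> U" using U unfolding is_upset_def by blast
  qed
qed

lemma updownc_disjoint_open_updown:
  assumes "open_updown T le U" "A \<subseteq> S"
  shows "updownc T le A \<inter> U = {} \<longleftrightarrow> A \<inter> U = {}"
proof -
  have "is_upset T le U \<or> is_upset T le\<inverse>\<inverse> U"
    using assms(1) by (simp add: open_updown_def is_upset_conversep)
  then show ?thesis
  proof
    assume "is_upset T le U"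
    then show ?thesis by (rule updownc_disjoint_upset[OF _ assms(2)])
  next
    assume "is_upset T le\<inverse>\<inverse> U"
    then show ?thesis
      using compord_space.updownc_disjoint_upset[OF dual _ assms(2)] by (simp add: updownc_conversep)
  qed
qed

lemma updownc_subset_open_updown:
  assumes "open_updown T le U" "A \<subseteq> S"
  shows "updownc T le A \<subseteq> U \<longleftrightarrow> A \<subseteq> U"
proof -
  have "is_upset T le U \<or> is_upset T le\<inverse>\<inverse> U"
    using assms(1) by (simp add: open_updown_def is_upset_conversep)
  then show ?thesis
  proof
    assume "is_upset T le U"
    then show ?thesis by (rule updownc_subset_upset[OF _ assms(2)])
  next
    assume "is_upset T le\<inverse>\<inverse> U"
    then show ?thesis
      using compord_space.updownc_subset_upset[OF dual _ assms(2)] by (simp add: updownc_conversep)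
  qed
qed

end

section \<open>The convex Vietoris space\<close>

lemma topology_generated_by_eq_subbase:
  "topology_generated_by \<B> =
     topology (arbitrary union_of (finite intersection_of (\<lambda>x. x \<in> \<B>) relative_to \<Union>\<B>))"
  (is "_ = topology ?open")
proof (rule topology_eq[THEN iffD2], intro allI iffI)
  fix Z
  assume "openin (topology_generated_by \<B>) Z"
  then have "generate_topology_on \<B> Z" by (rule openin_topology_generated_by)
  moreover have "?open A" if "A \<in> \<B>" for A
    using that by (intro arbitrary_union_of_inc relative_to_subset_inc finite_intersection_of_inc) auto
  ultimately have "?open Z"
    using generate_topology_on_coarsest[OF istopology_subbase] by blast
  then show "openin (topology ?open) Z"
    by (simp add: openin_subbase)
next
  fix Z
  assume "openin (topology ?open) Z"
  then show "openin (topology_generated_by \<B>) Z"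
    by (rule minimal_topology_subbase[rotated 2])
      (auto simp: topology_generated_by_Basis simp flip: topology_generated_by_topspace)
qed

lemma compact_space_topology_generated_by:
  assumes "\<And>\<C>. \<C> \<subseteq> \<B> \<Longrightarrow> \<Union>\<B> \<subseteq> \<Union>\<C> \<Longrightarrow> \<exists>\<C>'. finite \<C>' \<and> \<C>' \<subseteq> \<C> \<and> \<Union>\<B> \<subseteq> \<Union>\<C>'"
  shows "compact_space (topology_generated_by \<B>)"
  using assms by (intro Alexander_subbase_alt[OF subset_refl])
    (simp_all add: topology_generated_by_eq_subbase)

definition vc_subbasis :: "'a topology \<Rightarrow> ('a \<Rightarrow> 'a \<Rightarrow> bool) \<Rightarrow> 'a set set set" where
  "vc_subbasis T le =
     {vc_diamond T le U | U. open_updown T le U} \<union> {vc_box T le U | U. open_updown T le U}"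

lemma vc_top_eq_generated_by: "vc_top T le = topology_generated_by (vc_subbasis T le)"
  by (simp add: vc_top_def vc_subbasis_def)

lemma openin_vc_diamond: "open_updown T le U \<Longrightarrow> openin (vc_top T le) (vc_diamond T le U)"
  unfolding vc_top_eq_generated_by vc_subbasis_def by (rule topology_generated_by_Basis) blast

lemma openin_vc_box: "open_updown T le U \<Longrightarrow> openin (vc_top T le) (vc_box T le U)"
  unfolding vc_top_eq_generated_by vc_subbasis_def by (rule topology_generated_by_Basis) blast

lemma vc_le_refl: "vc_le T le K K"
  by (simp add: vc_le_def)

lemma vc_le_trans: "vc_le T le K L \<Longrightarrow> vc_le T le L M \<Longrightarrow> vc_le T le K M"
  unfolding vc_le_def by blast

lemma convex_set_complement_updowns:
  assumes "\<forall>U\<in>\<D>. is_upset T le U \<or> is_downset T le U"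
  shows "convex_set T le (topspace T - \<Union>\<D>)"
  unfolding convex_set_def
proof (intro ballI impI, elim conjE)
  fix y1 y2 x
  assume y: "y1 \<in> topspace T - \<Union>\<D>" "y2 \<in> topspace T - \<Union>\<D>" and x: "x \<in> topspace T"
    and "le y1 x" "le x y2"
  show "x \<in> topspace T - \<Union>\<D>"
  proof (rule ccontr)
    assume "x \<notin> topspace T - \<Union>\<D>"
    then obtain U where U: "U \<in> \<D>" "x \<in> U" using x by blast
    have "y2 \<in> upc T le U" "y1 \<in> downc T le U"
      using y U(2) \<open>le y1 x\<close> \<open>le x y2\<close> unfolding upc_def downc_def by blast+
    then have "y2 \<in> U \<or> y1 \<in> U"
      using assms U(1) unfolding is_upset_def is_downset_def by blast
    then show False using y U(1) by blast
  qed
qed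

context compord_space
begin

lemma vc_set_subset: "K \<in> vc_set T le \<Longrightarrow> K \<subseteq> S"
  unfolding vc_set_def using closedin_subset by blast

lemma closedin_vc_set: "K \<in> vc_set T le \<Longrightarrow> closedin T K"
  unfolding vc_set_def by blast

lemma updownc_vc_set: "K \<in> vc_set T le \<Longrightarrow> updownc T le K = K"
  using subset_updownc[OF vc_set_subset]
  unfolding vc_set_def convex_set_def updownc_def upc_def downc_def by blast

lemma vc_set_updownc:
  assumes "closedin T A" shows "updownc T le A \<in> vc_set T le"
proof -
  have "convex_set T le (upc T le A \<inter> downc T le A)"
    using is_upset_upc[OF closedin_subset[OF assms]] is_downset_downc[OF closedin_subset[OF assms]]
    unfolding convex_set_def is_upset_def is_downset_def upc_def downc_def by blast
  then show ?thesis
    using closedin_upc[OF assms] closedin_downc[OF assms]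
    unfolding vc_set_def updownc_def by blast
qed

lemma vc_le_updownc:
  "A \<subseteq> S \<Longrightarrow> B \<subseteq> S \<Longrightarrow> vc_le T le (updownc T le A) (updownc T le B) \<longleftrightarrow> vc_le T le A B"
  by (simp add: vc_le_def upc_updownc downc_updownc)

lemma vc_le_antisym:
  "K \<in> vc_set T le \<Longrightarrow> L \<in> vc_set T le \<Longrightarrow> vc_le T le K L \<Longrightarrow> vc_le T le L K \<Longrightarrow> K = L"
  unfolding vc_le_def by (metis updownc_def updownc_vc_set subset_antisym)

lemma open_updown_topspace: "open_updown T le S"
  unfolding open_updown_def is_upset_def upc_def by blast

lemma Union_vc_subbasis: "\<Union>(vc_subbasis T le) = vc_set T le"
proof
  show "\<Union>(vc_subbasis T le) \<subseteq> vc_set T le"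
    unfolding vc_subbasis_def vc_diamond_def vc_box_def by blast
  have "vc_box T le S = vc_set T le"
    unfolding vc_box_def using vc_set_subset by blast
  then show "vc_set T le \<subseteq> \<Union>(vc_subbasis T le)"
    using open_updown_topspace unfolding vc_subbasis_def by blast
qed

lemma topspace_vc_top: "topspace (vc_top T le) = vc_set T le"
  by (simp add: vc_top_eq_generated_by Union_vc_subbasis)

lemma vc_le_separation_upc:
  assumes K: "K \<in> vc_set T le" and L: "L \<in> vc_set T le" and "\<not> upc T le L \<subseteq> upc T le K"
  shows "\<exists>\<A> \<B>. openin (vc_top T le) \<A> \<and> openin (vc_top T le) \<B> \<and> K \<in> \<A> \<and> L \<in> \<B> \<and>
           (\<forall>K'\<in>\<A>. \<forall>L'\<in>\<B>. \<not> vc_le T le K' L')"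
proof -
  have KS: "K \<subseteq> S" and LS: "L \<subseteq> S" using K L by (simp_all add: vc_set_subset)
  obtain x where x: "x \<in> upc T le L" "x \<notin> upc T le K" using assms(3) by blast
  then have xS: "x \<in> S" unfolding upc_def by blast
  have "upc T le K \<inter> downc T le {x} = {}"
    using x is_upset_upc[OF KS] unfolding is_upset_def downc_def upc_def by blast
  then obtain U W where U: "openin T U" "is_upset T le U" "upc T le K \<subseteq> U"
    and W: "openin T W" "is_downset T le W" "downc T le {x} \<subseteq> W" and UW: "U \<inter> W = {}"
    using separate_upset_downset[OF closedin_upc[OF closedin_vc_set[OF K]] is_upset_upc[OF KS]
        closedin_downc[OF closedin_singleton[OF xS]] is_downset_downc] xS
    by blast
  have "K \<in> vc_box T le U"
    using K subset_upc[OF KS] U(3) unfolding vc_box_def by blast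
  moreover have "L \<in> vc_diamond T le W"
    using x L LS W(3) unfolding vc_diamond_def upc_def downc_def by blast
  moreover have "\<not> vc_le T le K' L'"
    if K': "K' \<in> vc_box T le U" and L': "L' \<in> vc_diamond T le W" for K' L'
  proof
    assume le: "vc_le T le K' L'"
    obtain l where l: "l \<in> L'" "l \<in> W" using L' unfolding vc_diamond_def by blast
    have "L' \<subseteq> S" using L' vc_set_subset unfolding vc_diamond_def by blast
    then have "l \<in> upc T le L'" using l(1) subset_upc by blast
    then have "l \<in> upc T le K'" using le unfolding vc_le_def by blast
    then have "l \<in> upc T le U" using K' unfolding vc_box_def upc_def by blast
    then show False using U(2) l(2) UW unfolding is_upset_def by blast
  qed
  ultimately show ?thesis
    using U W by (intro exI[of _ "vc_box T le U"] exI[of _ "vc_diamond T le W"])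
      (simp add: openin_vc_box openin_vc_diamond open_updown_def)
qed

lemma vc_le_separation:
  assumes K: "K \<in> vc_set T le" and L: "L \<in> vc_set T le" and "\<not> vc_le T le K L"
  shows "\<exists>\<A> \<B>. openin (vc_top T le) \<A> \<and> openin (vc_top T le) \<B> \<and> K \<in> \<A> \<and> L \<in> \<B> \<and>
           (\<forall>K'\<in>\<A>. \<forall>L'\<in>\<B>. \<not> vc_le T le K' L')"
proof (cases "upc T le L \<subseteq> upc T le K")
  case False
  then show ?thesis using vc_le_separation_upc[OF K L] by blast
next
  case True
  then have "\<not> upc T le\<inverse>\<inverse> K \<subseteq> upc T le\<inverse>\<inverse> L"
    using assms(3) by (simp add: vc_le_def upc_conversep)
  then show ?thesis
    using compord_space.vc_le_separation_upc[OF dual, of L K] K L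
    by (simp add: vc_set_conversep vc_top_conversep vc_le_conversep) blast
qed

lemma hausdorff_vc_top: "Hausdorff_space (vc_top T le)"
proof -
  have separated: "\<exists>\<A> \<B>. openin (vc_top T le) \<A> \<and> openin (vc_top T le) \<B> \<and>
      K \<in> \<A> \<and> L \<in> \<B> \<and> disjnt \<A> \<B>"
    if KL: "K \<in> vc_set T le" "L \<in> vc_set T le" "\<not> vc_le T le K L" for K L
  proof -
    obtain \<A> \<B> where AB: "openin (vc_top T le) \<A>" "openin (vc_top T le) \<B>" "K \<in> \<A>" "L \<in> \<B>"
      and sep: "\<forall>K'\<in>\<A>. \<forall>L'\<in>\<B>. \<not> vc_le T le K' L'"
      using vc_le_separation[OF KL] by blast
    have "disjnt \<A> \<B>"
      using sep vc_le_refl[of T le] unfolding disjnt_def by blast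
    with AB show ?thesis by blast
  qed
  show ?thesis
    unfolding Hausdorff_space_def topspace_vc_top
  proof (intro allI impI, elim conjE)
    fix K L assume K: "K \<in> vc_set T le" and L: "L \<in> vc_set T le" and "K \<noteq> L"
    then consider "\<not> vc_le T le K L" | "\<not> vc_le T le L K"
      using vc_le_antisym[OF K L] by blast
    then show "\<exists>\<A> \<B>. openin (vc_top T le) \<A> \<and> openin (vc_top T le) \<B> \<and>
        K \<in> \<A> \<and> L \<in> \<B> \<and> disjnt \<A> \<B>"
    proof cases
      case 1
      then show ?thesis by (rule separated[OF K L])
    next
      case 2
      then obtain \<A> \<B> where "openin (vc_top T le) \<A>" "openin (vc_top T le) \<B>"
        "L \<in> \<A>" "K \<in> \<B>" "disjnt \<A> \<B>"
        using separated[OF L K 2] by blast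
      then show ?thesis
        by (intro exI[of _ \<B>] exI[of _ \<A>]) (simp add: disjnt_sym)
    qed
  qed
qed

lemma closedin_vc_le:
  "closedin (prod_topology (vc_top T le) (vc_top T le))
     {(K, L). K \<in> vc_set T le \<and> L \<in> vc_set T le \<and> vc_le T le K L}"
  (is "closedin ?P ?G")
proof -
  have nbhd: "\<exists>\<W>. openin ?P \<W> \<and> p \<in> \<W> \<and> \<W> \<subseteq> topspace ?P - ?G"
    if "p \<in> topspace ?P - ?G" for p
  proof -
    obtain K L where p: "p = (K, L)" by (cases p)
    then have KL: "K \<in> vc_set T le" "L \<in> vc_set T le" "\<not> vc_le T le K L"
      using that by (auto simp: topspace_vc_top)
    then obtain \<A> \<B> where AB: "openin (vc_top T le) \<A>" "openin (vc_top T le) \<B>" "K \<in> \<A>" "L \<in> \<B>"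
      and sep: "\<forall>K'\<in>\<A>. \<forall>L'\<in>\<B>. \<not> vc_le T le K' L'"
      using vc_le_separation[OF KL] by blast
    have "\<A> \<subseteq> vc_set T le" "\<B> \<subseteq> vc_set T le"
      using openin_subset[OF AB(1)] openin_subset[OF AB(2)] by (simp_all add: topspace_vc_top)
    then have "\<A> \<times> \<B> \<subseteq> topspace ?P - ?G"
      using sep by (auto simp: topspace_vc_top)
    moreover have "openin ?P (\<A> \<times> \<B>)"
      using AB(1,2) by (simp add: openin_prod_Times_iff)
    ultimately show ?thesis
      using p AB(3,4) by blast
  qed
  show ?thesis
    unfolding closedin_def
  proof
    show "?G \<subseteq> topspace ?P" by (auto simp: topspace_vc_top)
    show "openin ?P (topspace ?P - ?G)"
      by (subst openin_subopen) (use nbhd in blast)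
  qed
qed

text \<open>The points lying in no U with \<open>vc_diamond T le U \<in> \<C>\<close> form a closed convex set, and
  only a box can contain it.\<close>
lemma vc_subbasis_cover_has_box:
  assumes \<C>: "\<C> \<subseteq> vc_subbasis T le" and cover: "vc_set T le \<subseteq> \<Union>\<C>"
  obtains U0 where "open_updown T le U0" "vc_box T le U0 \<in> \<C>"
    "S - U0 \<subseteq> \<Union>{U. open_updown T le U \<and> vc_diamond T le U \<in> \<C>}"
proof -
  define \<D> where "\<D> = {U. open_updown T le U \<and> vc_diamond T le U \<in> \<C>}"
  define F where "F = S - \<Union>\<D>"
  have open_\<D>: "\<forall>U\<in>\<D>. openin T U" and updown_\<D>: "\<forall>U\<in>\<D>. is_upset T le U \<or> is_downset T le U"
    unfolding \<D>_def open_updown_def by blast+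
  have "F \<in> vc_set T le"
    using convex_set_complement_updowns[OF updown_\<D>] open_\<D>
    unfolding vc_set_def F_def by (blast intro: closedin_diff openin_Union)
  then obtain c where c: "c \<in> \<C>" "F \<in> c"
    using cover by blast
  then obtain U0 where U0: "open_updown T le U0" "c = vc_diamond T le U0 \<or> c = vc_box T le U0"
    using \<C> unfolding vc_subbasis_def by blast
  have "c \<noteq> vc_diamond T le U0"
  proof
    assume "c = vc_diamond T le U0"
    then have "U0 \<in> \<D>" using c U0(1) unfolding \<D>_def by blast
    then show False using c \<open>c = vc_diamond T le U0\<close> unfolding vc_diamond_def F_def by blast
  qed
  then have box: "c = vc_box T le U0" using U0(2) by blast
  then have "S - U0 \<subseteq> \<Union>\<D>" using c unfolding vc_box_def F_def by blast
  then show ?thesis using that U0(1) box c(1) unfolding \<D>_def by blast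
qed

lemma compact_vc_top: "compact_space (vc_top T le)"
  unfolding vc_top_eq_generated_by
proof (rule compact_space_topology_generated_by)
  fix \<C> assume \<C>: "\<C> \<subseteq> vc_subbasis T le" and cover: "\<Union>(vc_subbasis T le) \<subseteq> \<Union>\<C>"
  define \<D> where "\<D> = {U. open_updown T le U \<and> vc_diamond T le U \<in> \<C>}"
  obtain U0 where U0: "open_updown T le U0" "vc_box T le U0 \<in> \<C>" and "S - U0 \<subseteq> \<Union>\<D>"
    using vc_subbasis_cover_has_box[OF \<C>] cover Union_vc_subbasis unfolding \<D>_def by metis
  moreover have "compactin T (S - U0)"
    using U0(1) unfolding open_updown_def by (intro closedin_compact_space compact) blast
  moreover have "\<forall>U\<in>\<D>. openin T U" unfolding \<D>_def open_updown_def by blast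
  ultimately obtain \<D>' where \<D>': "finite \<D>'" "\<D>' \<subseteq> \<D>" "S - U0 \<subseteq> \<Union>\<D>'"
    unfolding compactin_def by meson
  define \<C>' where "\<C>' = insert (vc_box T le U0) (vc_diamond T le ` \<D>')"
  have "finite \<C>'" unfolding \<C>'_def using \<D>'(1) by simp
  moreover have "\<C>' \<subseteq> \<C>" unfolding \<C>'_def using U0(2) \<D>' unfolding \<D>_def by blast
  moreover have "vc_set T le \<subseteq> \<Union>\<C>'"
  proof
    fix K assume K: "K \<in> vc_set T le"
    show "K \<in> \<Union>\<C>'"
    proof (cases "K \<subseteq> U0")
      case True
      then have "K \<in> vc_box T le U0" using K unfolding vc_box_def by blast
      then show ?thesis unfolding \<C>'_def by blast
    next
      case False
      then obtain x where "x \<in> K" "x \<notin> U0" by blast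
      then obtain U where "U \<in> \<D>'" "x \<in> U" using \<D>'(3) vc_set_subset[OF K] by blast
      then show ?thesis using K \<open>x \<in> K\<close> unfolding \<C>'_def vc_diamond_def by blast
    qed
  qed
  ultimately show "\<exists>\<C>'. finite \<C>' \<and> \<C>' \<subseteq> \<C> \<and> \<Union>(vc_subbasis T le) \<subseteq> \<Union>\<C>'"
    unfolding Union_vc_subbasis by blast
qed

lemma compord_vc_top: "compord (vc_top T le) (vc_le T le)"
  unfolding compord_def topspace_vc_top
  using compact_vc_top hausdorff_vc_top closedin_vc_le vc_le_refl vc_le_trans vc_le_antisym
  by blast

end

section \<open>The convex Vietoris functor\<close>

locale compord_morphism = X: compord_space TX leX + Y: compord_space TY leY
  for TX :: "'a topology" and leX and TY :: "'b topology" and leY +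
  fixes f :: "'a \<Rightarrow> 'b"
  assumes morphism: "compord_mor TX leX TY leY f"
begin

lemma continuous: "continuous_map TX TY f"
  and mono: "x \<in> X.S \<Longrightarrow> y \<in> X.S \<Longrightarrow> leX x y \<Longrightarrow> leY (f x) (f y)"
  using morphism unfolding compord_mor_def by blast+

lemma image_subset: "A \<subseteq> X.S \<Longrightarrow> f ` A \<subseteq> Y.S"
  using continuous_map_image_subset_topspace[OF continuous] by blast

lemma dual: "compord_morphism TX leX\<inverse>\<inverse> TY leY\<inverse>\<inverse> f"
proof -
  interpret X': compord_space TX "leX\<inverse>\<inverse>" by (rule X.dual)
  interpret Y': compord_space TY "leY\<inverse>\<inverse>" by (rule Y.dual)
  show ?thesis
    by unfold_locales (simp add: compord_mor_conversep morphism)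
qed

lemma vc_map_in_vc_set: "K \<in> vc_set TX leX \<Longrightarrow> vc_map TY leY f K \<in> vc_set TY leY"
  unfolding vc_map_def
  using X.closedin_image[OF morphism Y.compord] X.closedin_vc_set Y.vc_set_updownc by blast

lemma upc_image_mono:
  assumes "K \<subseteq> X.S" "L \<subseteq> X.S" "upc TX leX L \<subseteq> upc TX leX K"
  shows "upc TY leY (f ` L) \<subseteq> upc TY leY (f ` K)"
proof
  fix y assume "y \<in> upc TY leY (f ` L)"
  then obtain l where l: "l \<in> L" "leY (f l) y" "y \<in> Y.S" unfolding upc_def by blast
  then have "l \<in> upc TX leX K" using assms X.subset_upc by blast
  then obtain k where k: "k \<in> K" "leX k l" unfolding upc_def by blast
  then have "leY (f k) y"
    using l assms(1,2) mono[of k l] Y.ord_trans[of "f k" "f l" y] image_subset by blast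
  then show "y \<in> upc TY leY (f ` K)" using k l(3) unfolding upc_def by blast
qed

lemma mono_vc_map:
  assumes K: "K \<in> vc_set TX leX" and L: "L \<in> vc_set TX leX" and "vc_le TX leX K L"
  shows "vc_le TY leY (vc_map TY leY f K) (vc_map TY leY f L)"
proof -
  have KS: "K \<subseteq> X.S" and LS: "L \<subseteq> X.S" using K L X.vc_set_subset by blast+
  have "upc TY leY (f ` L) \<subseteq> upc TY leY (f ` K)"
    using upc_image_mono[OF KS LS] assms(3) unfolding vc_le_def by blast
  moreover have "downc TY leY (f ` K) \<subseteq> downc TY leY (f ` L)"
    using compord_morphism.upc_image_mono[OF dual LS KS] assms(3)
    by (simp add: vc_le_def upc_conversep)
  ultimately show ?thesis
    unfolding vc_map_def using Y.vc_le_updownc image_subset[OF KS] image_subset[OF LS]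
    by (simp add: vc_le_def)
qed

lemma vc_map_updownc:
  assumes "A \<subseteq> X.S" shows "vc_map TY leY f (updownc TX leX A) = vc_map TY leY f A"
proof -
  have AS: "updownc TX leX A \<subseteq> X.S" unfolding updownc_def upc_def by blast
  have "upc TY leY (f ` updownc TX leX A) = upc TY leY (f ` A)"
    using upc_image_mono[OF assms AS] upc_image_mono[OF AS assms] X.upc_updownc[OF assms] by blast
  moreover have "downc TY leY (f ` updownc TX leX A) = downc TY leY (f ` A)"
    using compord_morphism.upc_image_mono[OF dual assms AS] compord_morphism.upc_image_mono[OF dual AS assms]
      X.downc_updownc[OF assms]
    by (simp add: upc_conversep updownc_conversep)
  ultimately show ?thesis by (simp add: vc_map_def updownc_def)
qed

lemma is_upset_preimage:
  assumes "is_upset TY leY U"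
  shows "is_upset TX leX {x \<in> X.S. f x \<in> U}"
  unfolding is_upset_def
proof (intro conjI)
  show "{x \<in> X.S. f x \<in> U} \<subseteq> X.S" by blast
  show "upc TX leX {x \<in> X.S. f x \<in> U} \<subseteq> {x \<in> X.S. f x \<in> U}"
  proof
    fix y assume "y \<in> upc TX leX {x \<in> X.S. f x \<in> U}"
    then obtain x where x: "y \<in> X.S" "x \<in> X.S" "f x \<in> U" "leX x y" unfolding upc_def by blast
    have "f y \<in> Y.S" using image_subset x(1) by blast
    then have "f y \<in> upc TY leY U"
      using x mono[of x y] unfolding upc_def by blast
    then show "y \<in> {x \<in> X.S. f x \<in> U}" using assms x(1) unfolding is_upset_def by blast
  qed
qed

lemma open_updown_preimage:
  assumes "open_updown TY leY U" shows "open_updown TX leX {x \<in> X.S. f x \<in> U}"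
proof -
  have "openin TX {x \<in> X.S. f x \<in> U}"
    using assms unfolding open_updown_def by (intro openin_continuous_map_preimage[OF continuous]) blast
  moreover have "is_upset TY leY U \<or> is_upset TY leY\<inverse>\<inverse> U"
    using assms by (simp add: open_updown_def is_upset_conversep)
  then have "is_upset TX leX {x \<in> X.S. f x \<in> U} \<or> is_upset TX leX\<inverse>\<inverse> {x \<in> X.S. f x \<in> U}"
  proof
    assume "is_upset TY leY U"
    then show ?thesis using is_upset_preimage by blast
  next
    assume "is_upset TY leY\<inverse>\<inverse> U"
    then show ?thesis using compord_morphism.is_upset_preimage[OF dual] by blast
  qed
  ultimately show ?thesis
    unfolding open_updown_def is_upset_conversep by blast
qed

lemma vc_map_preimage_vc_diamond:
  assumes "open_updown TY leY U"
  shows "{K \<in> vc_set TX leX. vc_map TY leY f K \<in> vc_diamond TY leY U}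
       = vc_diamond TX leX {x \<in> X.S. f x \<in> U}"
proof -
  have "vc_map TY leY f K \<inter> U \<noteq> {} \<longleftrightarrow> K \<inter> {x \<in> X.S. f x \<in> U} \<noteq> {}"
    if "K \<in> vc_set TX leX" for K
    using Y.updownc_disjoint_open_updown[OF assms image_subset] X.vc_set_subset[OF that]
    unfolding vc_map_def by blast
  then show ?thesis
    using vc_map_in_vc_set unfolding vc_diamond_def by blast
qed

lemma vc_map_preimage_vc_box:
  assumes "open_updown TY leY U"
  shows "{K \<in> vc_set TX leX. vc_map TY leY f K \<in> vc_box TY leY U}
       = vc_box TX leX {x \<in> X.S. f x \<in> U}"
proof -
  have "vc_map TY leY f K \<subseteq> U \<longleftrightarrow> K \<subseteq> {x \<in> X.S. f x \<in> U}"
    if "K \<in> vc_set TX leX" for K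
    using Y.updownc_subset_open_updown[OF assms image_subset] X.vc_set_subset[OF that]
    unfolding vc_map_def by blast
  then show ?thesis
    using vc_map_in_vc_set unfolding vc_box_def by blast
qed

lemma continuous_vc_map:
  "continuous_map (vc_top TX leX) (vc_top TY leY) (vc_map TY leY f)"
  unfolding vc_top_eq_generated_by[of TY] continuous_on_generated_topo_iff
proof (intro conjI allI impI)
  show "vc_map TY leY f ` topspace (vc_top TX leX) \<subseteq> \<Union>(vc_subbasis TY leY)"
    using vc_map_in_vc_set by (auto simp: X.topspace_vc_top Y.Union_vc_subbasis)
  fix \<A> assume "\<A> \<in> vc_subbasis TY leY"
  then obtain U where U: "open_updown TY leY U"
    and \<A>: "\<A> = vc_diamond TY leY U \<or> \<A> = vc_box TY leY U"
    unfolding vc_subbasis_def by blast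
  have preimage: "vc_map TY leY f -` \<A> \<inter> topspace (vc_top TX leX)
      = {K \<in> vc_set TX leX. vc_map TY leY f K \<in> \<A>}"
    by (auto simp: X.topspace_vc_top)
  from \<A> show "openin (vc_top TX leX) (vc_map TY leY f -` \<A> \<inter> topspace (vc_top TX leX))"
  proof
    assume \<A>_eq: "\<A> = vc_diamond TY leY U"
    show ?thesis
      unfolding preimage unfolding \<A>_eq vc_map_preimage_vc_diamond[OF U]
      by (intro openin_vc_diamond open_updown_preimage U)
  next
    assume \<A>_eq: "\<A> = vc_box TY leY U"
    show ?thesis
      unfolding preimage unfolding \<A>_eq vc_map_preimage_vc_box[OF U]
      by (intro openin_vc_box open_updown_preimage U)
  qed
qed

lemma compord_mor_vc_map:
  "compord_mor (vc_top TX leX) (vc_le TX leX) (vc_top TY leY) (vc_le TY leY) (vc_map TY leY f)"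
  unfolding compord_mor_def X.topspace_vc_top using continuous_vc_map mono_vc_map by blast

lemma upc_image_reflect:
  assumes reflect: "\<forall>a\<in>X.S. \<forall>b\<in>X.S. leY (f a) (f b) \<longrightarrow> leX a b"
    and "K \<subseteq> X.S" "L \<subseteq> X.S" "upc TY leY (f ` L) \<subseteq> upc TY leY (f ` K)"
  shows "upc TX leX L \<subseteq> upc TX leX K"
proof
  fix x assume "x \<in> upc TX leX L"
  then obtain l where l: "l \<in> L" "leX l x" and x: "x \<in> X.S" unfolding upc_def by blast
  have "f x \<in> Y.S" using image_subset x by blast
  then have "f x \<in> upc TY leY (f ` L)"
    using l x assms(3) mono[of l x] unfolding upc_def by blast
  then obtain k where "k \<in> K" "leY (f k) (f x)"
    using assms(4) unfolding upc_def by blast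
  then show "x \<in> upc TX leX K"
    using reflect x assms(2) unfolding upc_def by blast
qed

lemma vc_map_reflects_vc_le:
  assumes reflect: "\<forall>a\<in>X.S. \<forall>b\<in>X.S. leY (f a) (f b) \<longrightarrow> leX a b"
    and K: "K \<in> vc_set TX leX" and L: "L \<in> vc_set TX leX"
    and le: "vc_le TY leY (vc_map TY leY f K) (vc_map TY leY f L)"
  shows "vc_le TX leX K L"
proof -
  have KS: "K \<subseteq> X.S" and LS: "L \<subseteq> X.S" using K L X.vc_set_subset by blast+
  have "vc_le TY leY (f ` K) (f ` L)"
    using le Y.vc_le_updownc[OF image_subset[OF KS] image_subset[OF LS]] by (simp add: vc_map_def)
  then have "upc TY leY (f ` L) \<subseteq> upc TY leY (f ` K)"
    and "upc TY leY\<inverse>\<inverse> (f ` K) \<subseteq> upc TY leY\<inverse>\<inverse> (f ` L)"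
    by (simp_all add: vc_le_def upc_conversep)
  then have "upc TX leX L \<subseteq> upc TX leX K" and "upc TX leX\<inverse>\<inverse> K \<subseteq> upc TX leX\<inverse>\<inverse> L"
    using upc_image_reflect[OF reflect KS LS] compord_morphism.upc_image_reflect[OF dual _ LS KS] reflect
    by auto
  then show ?thesis by (simp add: vc_le_def upc_conversep)
qed

lemma inj_on_order_reflecting:
  assumes reflect: "\<forall>a\<in>X.S. \<forall>b\<in>X.S. leY (f a) (f b) \<longrightarrow> leX a b"
  shows "inj_on f X.S"
proof (rule inj_onI)
  fix a b assume "a \<in> X.S" "b \<in> X.S" "f a = f b"
  moreover have "f a \<in> Y.S" using \<open>a \<in> X.S\<close> image_subset by blast
  then have "leY (f a) (f b)" using \<open>f a = f b\<close> Y.ord_refl by metis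
  ultimately show "a = b"
    using reflect X.ord_antisym[of a b] by auto
qed

lemma continuous_map_inv_into:
  assumes reflect: "\<forall>a\<in>X.S. \<forall>b\<in>X.S. leY (f a) (f b) \<longrightarrow> leX a b"
    and z: "continuous_map TZ TY z" and range: "z ` topspace TZ \<subseteq> f ` X.S"
  shows "continuous_map TZ TX (\<lambda>w. inv_into X.S f (z w))"
  unfolding continuous_map_closedin
proof (intro conjI allI impI)
  let ?u = "\<lambda>w. inv_into X.S f (z w)"
  have inj: "inj_on f X.S" using inj_on_order_reflecting[OF reflect] .
  have fu: "f (?u w) = z w" and uS: "?u w \<in> X.S" if "w \<in> topspace TZ" for w
  proof -
    have "z w \<in> f ` X.S" using range that by blast
    then show "f (?u w) = z w" "?u w \<in> X.S" by (rule f_inv_into_f, rule inv_into_into)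
  qed
  then show "?u \<in> topspace TZ \<rightarrow> X.S" by blast
  fix C assume C: "closedin TX C"
  have CS: "C \<subseteq> X.S" using closedin_subset[OF C] .
  have "?u w \<in> C \<longleftrightarrow> z w \<in> f ` C" if w: "w \<in> topspace TZ" for w
  proof
    show "?u w \<in> C \<Longrightarrow> z w \<in> f ` C" using fu[OF w] by force
    assume "z w \<in> f ` C"
    then obtain c where c: "c \<in> C" "z w = f c" by blast
    then have "f (?u w) = f c" using fu[OF w] by simp
    then have "?u w = c" using inj_onD[OF inj _ uS[OF w]] c(1) CS by blast
    then show "?u w \<in> C" using c by simp
  qed
  then have "{w \<in> topspace TZ. ?u w \<in> C} = {w \<in> topspace TZ. z w \<in> f ` C}"
    by blast
  moreover have "closedin TY (f ` C)"
    using X.closedin_image[OF morphism Y.compord C] .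
  ultimately show "closedin TZ {w \<in> topspace TZ. ?u w \<in> C}"
    using closedin_continuous_map_preimage[OF z] by simp
qed

lemma factor_through_order_reflecting:
  assumes reflect: "\<forall>a\<in>X.S. \<forall>b\<in>X.S. leY (f a) (f b) \<longrightarrow> leX a b"
    and z: "compord_mor TZ leZ TY leY z" and range: "z ` topspace TZ \<subseteq> f ` X.S"
  shows "\<exists>u. compord_mor TZ leZ TX leX u \<and> (\<forall>w\<in>topspace TZ. f (u w) = z w) \<and>
    (\<forall>u'. compord_mor TZ leZ TX leX u' \<and> (\<forall>w\<in>topspace TZ. f (u' w) = z w) \<longrightarrow>
      (\<forall>w\<in>topspace TZ. u' w = u w))"
proof (intro exI conjI allI impI)
  let ?u = "\<lambda>w. inv_into X.S f (z w)"
  have zS: "\<forall>w\<in>topspace TZ. z w \<in> f ` X.S" using range by blast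
  then have fu: "\<forall>w\<in>topspace TZ. f (?u w) = z w" and uS: "\<forall>w\<in>topspace TZ. ?u w \<in> X.S"
    by (simp_all add: f_inv_into_f inv_into_into)
  then show "\<forall>w\<in>topspace TZ. f (?u w) = z w" by blast
  have "leX (?u w1) (?u w2)"
    if w: "w1 \<in> topspace TZ" "w2 \<in> topspace TZ" "leZ w1 w2" for w1 w2
  proof -
    have "leY (f (?u w1)) (f (?u w2))"
      using z w fu unfolding compord_mor_def by simp
    then show ?thesis using reflect uS w(1,2) by blast
  qed
  then show "compord_mor TZ leZ TX leX ?u"
    using continuous_map_inv_into[OF reflect _ range] z unfolding compord_mor_def by blast
  fix u' assume u': "compord_mor TZ leZ TX leX u' \<and> (\<forall>w\<in>topspace TZ. f (u' w) = z w)"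
  have "\<forall>w\<in>topspace TZ. u' w \<in> X.S"
    using u' continuous_map_image_subset_topspace unfolding compord_mor_def by blast
  then show "\<forall>w\<in>topspace TZ. u' w = ?u w"
    using u' fu uS inj_on_order_reflecting[OF reflect] unfolding inj_on_def by metis
qed

lemma vc_morphism:
  "compord_morphism (vc_top TX leX) (vc_le TX leX) (vc_top TY leY) (vc_le TY leY)
     (vc_map TY leY f)"
  by (intro compord_morphism.intro compord_space.intro compord_morphism_axioms.intro
      X.compord_vc_top Y.compord_vc_top compord_mor_vc_map)

end

section \<open>Coreflexive equalizers\<close>

locale compord_equalizer =
  f: compord_morphism TX leX TY leY f + g: compord_morphism TX leX TY leY g +
  h: compord_morphism TE leE TX leX h
  for TX :: "'x topology" and leX and TY :: "'y topology" and leY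
    and TE :: "'e topology" and leE and f g h +
  assumes equalizer: "is_equalizer_wrt TYPE('x) TE leE TX leX TY leY h f g"
begin

lemma equalizes: "e \<in> topspace TE \<Longrightarrow> f (h e) = g (h e)"
  using equalizer unfolding is_equalizer_wrt_def by blast

text \<open>The universal property only quantifies over test objects whose points have the type
  of X; closed subspaces of X are such objects.\<close>
lemma factor_closed_subspace:
  assumes C: "closedin TX C" and fg: "\<forall>x\<in>C. f x = g x"
  obtains u where "compord_mor (subtopology TX C) leX TE leE u" "\<forall>x\<in>C. h (u x) = x"
    "\<And>u'. compord_mor (subtopology TX C) leX TE leE u' \<Longrightarrow> \<forall>x\<in>C. h (u' x) = x \<Longrightarrow>
       \<forall>x\<in>C. u' x = u x"
proof -
  have top: "topspace (subtopology TX C) = C"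
    by (rule topspace_subtopology_subset[OF closedin_subset[OF C]])
  have universal: "\<forall>(TZ :: 'x topology) leZ z.
      compord TZ leZ \<and> compord_mor TZ leZ TX leX z \<and> (\<forall>w\<in>topspace TZ. f (z w) = g (z w)) \<longrightarrow>
      (\<exists>u. compord_mor TZ leZ TE leE u \<and> (\<forall>w\<in>topspace TZ. h (u w) = z w) \<and>
        (\<forall>u'. compord_mor TZ leZ TE leE u' \<and> (\<forall>w\<in>topspace TZ. h (u' w) = z w) \<longrightarrow>
          (\<forall>w\<in>topspace TZ. u' w = u w)))"
    using equalizer unfolding is_equalizer_wrt_def by blast
  have "compord_mor (subtopology TX C) leX TX leX (\<lambda>x. x)"
    unfolding compord_mor_def by (simp add: continuous_map_from_subtopology)
  then have "compord (subtopology TX C) leX \<and> compord_mor (subtopology TX C) leX TX leX (\<lambda>x. x) \<and>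
      (\<forall>w\<in>topspace (subtopology TX C). f w = g w)"
    using f.X.compord_subtopology[OF C] fg unfolding top by blast
  from universal[rule_format, OF this]
  obtain u where u: "compord_mor (subtopology TX C) leX TE leE u" "\<forall>x\<in>C. h (u x) = x"
    and unique: "\<forall>u'. compord_mor (subtopology TX C) leX TE leE u' \<and> (\<forall>x\<in>C. h (u' x) = x) \<longrightarrow>
       (\<forall>x\<in>C. u' x = u x)"
    unfolding top by blast
  show ?thesis
    by (rule that[OF u]) (use unique in blast)
qed

lemma inj_on_equalizer: "inj_on h (topspace TE)"
proof (rule inj_onI)
  fix e1 e2 assume e: "e1 \<in> topspace TE" "e2 \<in> topspace TE" and h12: "h e1 = h e2"
  let ?C = "{h e1}"
  have "h e1 \<in> topspace TX" using e(1) h.image_subset by blast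
  then have C: "closedin TX ?C" by (rule f.X.closedin_singleton)
  have fg: "\<forall>x\<in>?C. f x = g x" using equalizes e(1) by blast
  obtain u where unique: "\<And>u'. compord_mor (subtopology TX ?C) leX TE leE u' \<Longrightarrow>
      \<forall>x\<in>?C. h (u' x) = x \<Longrightarrow> \<forall>x\<in>?C. u' x = u x"
    by (rule factor_closed_subspace[OF C fg]) blast
  have const: "compord_mor (subtopology TX ?C) leX TE leE (\<lambda>_. e)" if "e \<in> topspace TE" for e
    using that h.X.ord_refl unfolding compord_mor_def by simp
  have "e1 = u (h e1)" using unique[OF const[OF e(1)]] by simp
  moreover have "e2 = u (h e1)" using unique[OF const[OF e(2)]] h12 by simp
  ultimately show "e1 = e2" by simp
qed

lemma equalizer_section:
  obtains u where "compord_mor (subtopology TX {x \<in> topspace TX. f x = g x}) leX TE leE u"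
    "\<forall>x\<in>topspace TX. f x = g x \<longrightarrow> u x \<in> topspace TE \<and> h (u x) = x"
proof -
  let ?C = "{x \<in> topspace TX. f x = g x}"
  have C: "closedin TX ?C"
    using closedin_continuous_maps_eq[OF f.Y.hausdorff f.continuous g.continuous] .
  have fg: "\<forall>x\<in>?C. f x = g x" by blast
  obtain u where u: "compord_mor (subtopology TX ?C) leX TE leE u" "\<forall>x\<in>?C. h (u x) = x"
    by (rule factor_closed_subspace[OF C fg]) blast
  have "u ` topspace (subtopology TX ?C) \<subseteq> topspace TE"
    using u(1) continuous_map_image_subset_topspace unfolding compord_mor_def by blast
  moreover have "topspace (subtopology TX ?C) = ?C"
    by (simp add: topspace_subtopology) blast
  ultimately have "\<forall>x\<in>?C. u x \<in> topspace TE"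
    by blast
  with u show ?thesis using that by blast
qed

lemma image_equalizer: "h ` topspace TE = {x \<in> topspace TX. f x = g x}"
proof
  show "h ` topspace TE \<subseteq> {x \<in> topspace TX. f x = g x}"
    using equalizes h.image_subset by blast
  obtain u where "\<forall>x\<in>topspace TX. f x = g x \<longrightarrow> u x \<in> topspace TE \<and> h (u x) = x"
    by (rule equalizer_section)
  then show "{x \<in> topspace TX. f x = g x} \<subseteq> h ` topspace TE"
    by force
qed

lemma equalizer_reflects_order:
  "\<forall>a\<in>topspace TE. \<forall>b\<in>topspace TE. leX (h a) (h b) \<longrightarrow> leE a b"
proof (intro ballI impI)
  fix a b assume ab: "a \<in> topspace TE" "b \<in> topspace TE" and le: "leX (h a) (h b)"
  obtain u where u: "compord_mor (subtopology TX {x \<in> topspace TX. f x = g x}) leX TE leE u"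
    and hu: "\<forall>x\<in>topspace TX. f x = g x \<longrightarrow> u x \<in> topspace TE \<and> h (u x) = x"
    by (rule equalizer_section)
  have eq: "h a \<in> topspace TX" "f (h a) = g (h a)" "h b \<in> topspace TX" "f (h b) = g (h b)"
    using ab equalizes h.image_subset by blast+
  have "u (h a) = a" "u (h b) = b"
    using hu eq ab inj_on_equalizer unfolding inj_on_def by blast+
  moreover have "leE (u (h a)) (u (h b))"
    using u eq le unfolding compord_mor_def by simp
  ultimately show "leE a b" by simp
qed

end

locale compord_coreflexive_pair =
  f: compord_morphism TX leX TY leY f + g: compord_morphism TX leX TY leY g +
  k: compord_morphism TY leY TX leX k
  for TX :: "'x topology" and leX and TY :: "'y topology" and leY and f g k +
  assumes retraction_f: "\<forall>x\<in>topspace TX. k (f x) = x"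
    and retraction_g: "\<forall>x\<in>topspace TX. k (g x) = x"
begin

lemma swap: "compord_coreflexive_pair TX leX TY leY g f k"
proof unfold_locales
  show "\<forall>x\<in>topspace TX. k (g x) = x" by (rule retraction_g)
  show "\<forall>x\<in>topspace TX. k (f x) = x" by (rule retraction_f)
qed

lemma dual: "compord_coreflexive_pair TX leX\<inverse>\<inverse> TY leY\<inverse>\<inverse> f g k"
proof -
  interpret f': compord_morphism TX "leX\<inverse>\<inverse>" TY "leY\<inverse>\<inverse>" f by (rule f.dual)
  interpret g': compord_morphism TX "leX\<inverse>\<inverse>" TY "leY\<inverse>\<inverse>" g by (rule g.dual)
  interpret k': compord_morphism TY "leY\<inverse>\<inverse>" TX "leX\<inverse>\<inverse>" k by (rule k.dual)
  show ?thesis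
    using retraction_f retraction_g by unfold_locales blast+
qed

text \<open>The common retraction k transports an inequality between f and g values back to X, where
  minimality of m applies.\<close>
lemma le_at_minimal_point:
  assumes L: "L \<in> vc_set TX leX" and eq: "vc_map TY leY f L = vc_map TY leY g L"
    and m: "m \<in> L" "\<forall>l\<in>L. leX l m \<longrightarrow> l = m"
  shows "leY (g m) (f m)"
proof -
  have LS: "L \<subseteq> topspace TX" using f.X.vc_set_subset[OF L] .
  then have mS: "m \<in> topspace TX" using m(1) by blast
  have "f m \<in> vc_map TY leY f L"
    using m(1) f.Y.subset_updownc[OF f.image_subset[OF LS]] unfolding vc_map_def by blast
  then have "f m \<in> vc_map TY leY g L" by (simp only: eq)
  then have "f m \<in> upc TY leY (g ` L)"
    unfolding vc_map_def updownc_def by blast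
  then obtain l where l: "l \<in> L" "leY (g l) (f m)"
    unfolding upc_def by blast
  have "g l \<in> topspace TY" "f m \<in> topspace TY"
    using l(1) mS LS g.image_subset f.image_subset by blast+
  then have "leX (k (g l)) (k (f m))"
    using k.mono l(2) by blast
  then have "leX l m" using retraction_f retraction_g l(1) mS LS by auto
  then show ?thesis using m l by auto
qed

lemma minimal_point_equalized:
  assumes "L \<in> vc_set TX leX" "vc_map TY leY f L = vc_map TY leY g L"
    and "m \<in> L" "\<forall>l\<in>L. leX l m \<longrightarrow> l = m"
  shows "f m = g m"
proof -
  have LS: "L \<subseteq> topspace TX" using f.X.vc_set_subset assms(1) by blast
  have "leY (g m) (f m)" using le_at_minimal_point[OF assms] .
  moreover have "leY (f m) (g m)"
    using compord_coreflexive_pair.le_at_minimal_point[OF swap assms(1) assms(2)[symmetric] assms(3,4)] .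
  ultimately show ?thesis
    using f.Y.ord_antisym f.image_subset g.image_subset LS assms(3) by blast
qed

lemma maximal_point_equalized:
  assumes "L \<in> vc_set TX leX" "vc_map TY leY f L = vc_map TY leY g L"
    and "m \<in> L" "\<forall>l\<in>L. leX m l \<longrightarrow> l = m"
  shows "f m = g m"
  using compord_coreflexive_pair.minimal_point_equalized[OF dual] assms
  by (simp add: vc_set_conversep vc_map_conversep)

end

locale compord_coreflexive_equalizer =
  compord_equalizer TX leX TY leY TE leE f g h + compord_coreflexive_pair TX leX TY leY f g k
  for TX :: "'x topology" and leX and TY :: "'y topology" and leY
    and TE :: "'e topology" and leE and f g h k
begin

lemma vc_set_preimage:
  assumes L: "L \<in> vc_set TX leX" shows "{e \<in> topspace TE. h e \<in> L} \<in> vc_set TE leE"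
proof -
  have "closedin TE {e \<in> topspace TE. h e \<in> L}"
    using closedin_continuous_map_preimage[OF h.continuous f.X.closedin_vc_set[OF L]] .
  moreover have "convex_set TE leE {e \<in> topspace TE. h e \<in> L}"
    unfolding convex_set_def
  proof (intro ballI impI, elim conjE)
    fix e1 e2 e assume e: "e1 \<in> {e \<in> topspace TE. h e \<in> L}" "e2 \<in> {e \<in> topspace TE. h e \<in> L}"
      "e \<in> topspace TE" and "leE e1 e" "leE e e2"
    then have "leX (h e1) (h e)" "leX (h e) (h e2)" "h e \<in> topspace TX"
      using h.mono h.image_subset by blast+
    then have "h e \<in> L" using L e unfolding vc_set_def convex_set_def by blast
    then show "e \<in> {e \<in> topspace TE. h e \<in> L}" using e(3) by blast
  qed
  ultimately show ?thesis unfolding vc_set_def by blast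
qed

text \<open>Every point of an equalized L lies above a minimal and below a maximal point of L, and
  these lie in the image of h.\<close>
lemma vc_map_preimage_equalized:
  assumes L: "L \<in> vc_set TX leX" and eq: "vc_map TY leY f L = vc_map TY leY g L"
  shows "vc_map TX leX h {e \<in> topspace TE. h e \<in> L} = L"
proof
  let ?K = "{e \<in> topspace TE. h e \<in> L}"
  have LS: "L \<subseteq> topspace TX" using f.X.vc_set_subset[OF L] .
  have "h ` ?K \<subseteq> L" by blast
  then show "vc_map TX leX h ?K \<subseteq> L"
    using f.X.updownc_vc_set[OF L] unfolding vc_map_def updownc_def upc_def downc_def by blast
  show "L \<subseteq> vc_map TX leX h ?K"
  proof
    fix x assume x: "x \<in> L"
    then have xS: "x \<in> topspace TX" using LS by blast
    obtain m where m: "m \<in> L" "leX m x" "\<forall>y\<in>L. leX y m \<longrightarrow> y = m"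
      by (rule f.X.exists_minimal_below[OF f.X.closedin_vc_set[OF L] x])
    have "f m = g m" by (rule minimal_point_equalized[OF L eq m(1,3)])
    then obtain e where "e \<in> ?K" "h e = m"
      using image_equalizer m(1) LS by force
    then have "x \<in> upc TX leX (h ` ?K)" using m(2) xS unfolding upc_def by blast
    obtain m' where m': "m' \<in> L" "leX x m'" "\<forall>y\<in>L. leX m' y \<longrightarrow> y = m'"
      by (rule f.X.exists_maximal_above[OF f.X.closedin_vc_set[OF L] x])
    have "f m' = g m'" by (rule maximal_point_equalized[OF L eq m'(1,3)])
    then obtain e' where "e' \<in> ?K" "h e' = m'"
      using image_equalizer m'(1) LS by force
    then have "x \<in> downc TX leX (h ` ?K)" using m'(2) xS unfolding downc_def by blast
    with \<open>x \<in> upc TX leX (h ` ?K)\<close> show "x \<in> vc_map TX leX h ?K"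
      unfolding vc_map_def updownc_def by blast
  qed
qed

lemma equalized_in_image_vc_map:
  assumes "L \<in> vc_set TX leX" "vc_map TY leY f L = vc_map TY leY g L"
  shows "L \<in> vc_map TX leX h ` vc_set TE leE"
  using vc_map_preimage_equalized[OF assms] vc_set_preimage[OF assms(1)]
  by (rule image_eqI[where f = "vc_map TX leX h", OF sym])

lemma vc_map_equalizer_reflects_vc_le:
  "\<forall>K\<in>topspace (vc_top TE leE). \<forall>L\<in>topspace (vc_top TE leE).
     vc_le TX leX (vc_map TX leX h K) (vc_map TX leX h L) \<longrightarrow> vc_le TE leE K L"
  using h.vc_map_reflects_vc_le[OF equalizer_reflects_order] by (simp add: h.X.topspace_vc_top)

lemma vc_map_equalizes:
  assumes K: "K \<in> vc_set TE leE"
  shows "vc_map TY leY f (vc_map TX leX h K) = vc_map TY leY g (vc_map TX leX h K)"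
proof -
  have hK: "h ` K \<subseteq> topspace TX" using h.image_subset h.X.vc_set_subset[OF K] by blast
  have "f ` h ` K = g ` h ` K"
    using equalizes h.X.vc_set_subset[OF K] by (force simp: image_iff)
  then show ?thesis
    using f.vc_map_updownc[OF hK] g.vc_map_updownc[OF hK] unfolding vc_map_def[of TX] by (simp add: vc_map_def)
qed

lemma vc_equalizer:
  "is_equalizer_wrt TYPE('z) (vc_top TE leE) (vc_le TE leE) (vc_top TX leX) (vc_le TX leX)
     (vc_top TY leY) (vc_le TY leY) (vc_map TX leX h) (vc_map TY leY f) (vc_map TY leY g)"
  unfolding is_equalizer_wrt_def
proof (intro conjI allI impI)
  interpret Vh: compord_morphism "vc_top TE leE" "vc_le TE leE" "vc_top TX leX" "vc_le TX leX"
      "vc_map TX leX h"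
    by (rule h.vc_morphism)
  show "compord (vc_top TE leE) (vc_le TE leE)" by (rule h.X.compord_vc_top)
  show "compord_mor (vc_top TE leE) (vc_le TE leE) (vc_top TX leX) (vc_le TX leX) (vc_map TX leX h)"
    by (rule h.compord_mor_vc_map)
  show "\<forall>K\<in>topspace (vc_top TE leE).
      vc_map TY leY f (vc_map TX leX h K) = vc_map TY leY g (vc_map TX leX h K)"
    using vc_map_equalizes by (simp add: h.X.topspace_vc_top)
  fix TZ :: "'z topology" and leZ z
  assume "compord TZ leZ \<and> compord_mor TZ leZ (vc_top TX leX) (vc_le TX leX) z \<and>
    (\<forall>w\<in>topspace TZ. vc_map TY leY f (z w) = vc_map TY leY g (z w))"
  then have z: "compord_mor TZ leZ (vc_top TX leX) (vc_le TX leX) z"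
    and zfg: "\<forall>w\<in>topspace TZ. vc_map TY leY f (z w) = vc_map TY leY g (z w)" by blast+
  have "continuous_map TZ (vc_top TX leX) z"
    using z[unfolded compord_mor_def] by (rule conjunct1)
  then have "\<forall>w\<in>topspace TZ. z w \<in> vc_set TX leX"
    by (simp add: continuous_map_def Pi_iff f.X.topspace_vc_top)
  then have "z ` topspace TZ \<subseteq> vc_map TX leX h ` topspace (vc_top TE leE)"
    using equalized_in_image_vc_map zfg by (auto simp: h.X.topspace_vc_top)
  then show "\<exists>u. compord_mor TZ leZ (vc_top TE leE) (vc_le TE leE) u \<and>
      (\<forall>w\<in>topspace TZ. vc_map TX leX h (u w) = z w) \<and>
      (\<forall>u'. compord_mor TZ leZ (vc_top TE leE) (vc_le TE leE) u' \<and>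
        (\<forall>w\<in>topspace TZ. vc_map TX leX h (u' w) = z w) \<longrightarrow> (\<forall>w\<in>topspace TZ. u' w = u w))"
    by (rule Vh.factor_through_order_reflecting[OF vc_map_equalizer_reflects_vc_le z])
qed

end

theorem proposition3p23:
  fixes TE :: "'e topology" and leE :: "'e \<Rightarrow> 'e \<Rightarrow> bool"
    and TX :: "'x topology" and leX :: "'x \<Rightarrow> 'x \<Rightarrow> bool"
    and TY :: "'y topology" and leY :: "'y \<Rightarrow> 'y \<Rightarrow> bool"
    and f g :: "'x \<Rightarrow> 'y" and k :: "'y \<Rightarrow> 'x" and h :: "'e \<Rightarrow> 'x"
  assumes "compord TX leX" and "compord TY leY" and "compord TE leE"
    and "compord_mor TX leX TY leY f" and "compord_mor TX leX TY leY g"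
    and "compord_mor TY leY TX leX k"
    and "\<forall>x\<in>topspace TX. k (f x) = x" and "\<forall>x\<in>topspace TX. k (g x) = x"
    and "is_equalizer_wrt TYPE('x) TE leE TX leX TY leY h f g"
  shows "is_equalizer_wrt TYPE('z)
           (vc_top TE leE) (vc_le TE leE) (vc_top TX leX) (vc_le TX leX)
           (vc_top TY leY) (vc_le TY leY)
           (vc_map TX leX h) (vc_map TY leY f) (vc_map TY leY g)"
proof -
  have h: "compord_mor TE leE TX leX h"
    using assms(9) unfolding is_equalizer_wrt_def by blast
  interpret compord_coreflexive_equalizer TX leX TY leY TE leE f g h k
    using assms h by unfold_locales
  show ?thesis by (rule vc_equalizer)
qed

end
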